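(* Let $G$ be a Carnot group with left-invariant (sub-)Riemannian metric $d$ defined by the left-invariant distribution $D$ with $D(e)=V$ and a left-invariant inner product $\langle\cdot,\cdot\rangle$ on $D$. If $G$ is non-commutative, write $\mathfrak{g}=\bigoplus_{k=1}^{l}\mathfrak{g}_k$ for the grading with $\mathfrak{g}_1=V$, $l\ge 2$, and take the left-invariant rigging $D^{\perp}$ with $D^{\perp}(e)=\bigoplus_{k=2}^{l}\mathfrak{g}_k$. Then $(G,d)$ has zero curvatures (Riemannian curvatures if $G$ is commutative, and Solov'ev sectional, Ricci and scalar curvatures of $(D,\langle\cdot,\cdot\rangle)$ with respect to $D^{\perp}$ otherwise).
   Context: A Carnot group is a Lie group $G$ with Lie algebra $\mathfrak{g}$ equipped with a one-parameter multiplicative group of automorphisms $\delta_s$, $s>0$, such that $V=\{v\in\mathfrak{g}: d\delta_s(v)=sv\}$ generates $\mathfrak{g}$ as a Lie algebra; then $\mathfrak{g}$ is graded nilpotent, $\mathfrak{g}=\bigoplus_{k=1}^l\mathfrak{g}_k$ with $\mathfrak{g}_1=V$ and $[\mathfrak{g}_i,\mathfrak{g}_j]\subset\mathfrak{g}_{i+j}$. Solov'ev curvatures: choose a left-invariant Riemannian metric $(\cdot,\cdot)$ with $(\cdot,\cdot)|_D=\langle\cdot,\cdot\rangle$ and $(D,D^\perp)=0$; let $\nabla$ be its Levi-Civita connection, $H,V$ the projections onto $D,D^\perp$, $\overline{\nabla}_XY=H\nabla_X(HY)+V\nabla_X(VY)$, $T$ its torsion and $\overline{R}$ its curvature. For $X,Y,Z,W$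 tangent to $D$, $(K(X,Y)Z,W)=(\overline{R}(X,Y)Z,W)-\tfrac12(T(X,Y),T(Z,W))$; sectional curvature $K_{uv}=(K(u,v)v,u)/(\|u\|^2\|v\|^2-(u,v)^2)$ for non-collinear $u,v\in D(p)$, Ricci and scalar curvatures are the corresponding sums over orthonormal bases of $D(p)$. *)

theory Defs
  imports "HOL-Analysis.Analysis"
begin

text \<open>Algebraic model of a Carnot group via its Lie algebra g = T_e G.
  The type 'a (a finite-dimensional real inner product space) is g, and its
  inner product is the left-invariant Riemannian metric at e. All objects are
  left-invariant, so connections, torsion and curvatures are computed on
  left-invariant vector fields, i.e. on elements of g.\<close>

definition lie_algebra :: "('a::real_vector \<Rightarrow> 'a \<Rightarrow> 'a) \<Rightarrow> bool" where
  "lie_algebra br \<longleftrightarrow>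
     (\<forall>y. linear (\<lambda>x. br x y)) \<and> (\<forall>x. linear (\<lambda>y. br x y)) \<and>
     (\<forall>x. br x x = 0) \<and>
     (\<forall>x y z. br x (br y z) + br y (br z x) + br z (br x y) = 0)"

definition lie_generates :: "('a::real_vector \<Rightarrow> 'a \<Rightarrow> 'a) \<Rightarrow> 'a set \<Rightarrow> bool" where
  "lie_generates br V \<longleftrightarrow>
     \<Inter>{S. subspace S \<and> V \<subseteq> S \<and> (\<forall>x\<in>S. \<forall>y\<in>S. br x y \<in> S)} = UNIV"

definition direct_sum_decomp :: "(nat \<Rightarrow> 'a::real_vector set) \<Rightarrow> nat \<Rightarrow> bool" where
  "direct_sum_decomp gr l \<longleftrightarrow>
     (\<forall>k\<in>{1..l}. subspace (gr k)) \<and>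
     (\<forall>x. \<exists>!c. (\<forall>k\<in>{1..l}. c k \<in> gr k) \<and> (\<forall>k. k \<notin> {1..l} \<longrightarrow> c k = 0) \<and>
             x = (\<Sum>k=1..l. c k))"

definition carnot_algebra :: "('a::real_vector \<Rightarrow> 'a \<Rightarrow> 'a) \<Rightarrow> (nat \<Rightarrow> 'a set) \<Rightarrow> nat \<Rightarrow> bool" where
  "carnot_algebra br gr l \<longleftrightarrow>
     lie_algebra br \<and> l \<ge> 1 \<and> direct_sum_decomp gr l \<and> gr l \<noteq> {0} \<and>
     (\<forall>i\<in>{1..l}. \<forall>j\<in>{1..l}. \<forall>x\<in>gr i. \<forall>y\<in>gr j.
        br x y \<in> (if i + j \<le> l then gr (i + j) else {0})) \<and>
     lie_generates br (gr 1)"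

definition commutative_alg :: "('a::real_vector \<Rightarrow> 'a \<Rightarrow> 'a) \<Rightarrow> bool" where
  "commutative_alg br \<longleftrightarrow> (\<forall>x y. br x y = 0)"

text \<open>Levi-Civita connection on left-invariant fields (Koszul formula),
  expressed in an orthonormal basis.\<close>
definition lc_nabla :: "('a::euclidean_space \<Rightarrow> 'a \<Rightarrow> 'a) \<Rightarrow> 'a \<Rightarrow> 'a \<Rightarrow> 'a" where
  "lc_nabla br X Y = (\<Sum>b\<in>Basis.
      ((br X Y \<bullet> b - br Y b \<bullet> X + br b X \<bullet> Y) / 2) *\<^sub>R b)"

definition riem_curv :: "('a::euclidean_space \<Rightarrow> 'a \<Rightarrow> 'a) \<Rightarrow> 'a \<Rightarrow> 'a \<Rightarrow> 'a \<Rightarrow> 'a" where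
  "riem_curv br X Y Z = lc_nabla br X (lc_nabla br Y Z) - lc_nabla br Y (lc_nabla br X Z)
                         - lc_nabla br (br X Y) Z"

definition rigging :: "(nat \<Rightarrow> 'a::real_vector set) \<Rightarrow> nat \<Rightarrow> 'a set" where
  "rigging gr l = span (\<Union>k\<in>{2..l}. gr k)"

definition hproj :: "(nat \<Rightarrow> 'a::real_vector set) \<Rightarrow> nat \<Rightarrow> 'a \<Rightarrow> 'a" where
  "hproj gr l x = (THE h. h \<in> gr 1 \<and> x - h \<in> rigging gr l)"

definition vproj :: "(nat \<Rightarrow> 'a::real_vector set) \<Rightarrow> nat \<Rightarrow> 'a \<Rightarrow> 'a" where
  "vproj gr l x = (THE v. v \<in> rigging gr l \<and> x - v \<in> gr 1)"

definition nabla_bar :: "('a::euclidean_space \<Rightarrow> 'a \<Rightarrow> 'a) \<Rightarrow> (nat \<Rightarrow> 'a set) \<Rightarrow> nat \<Rightarrow> 'a \<Rightarrow> 'a \<Rightarrow> 'a" where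
  "nabla_bar br gr l X Y =
     hproj gr l (lc_nabla br X (hproj gr l Y)) + vproj gr l (lc_nabla br X (vproj gr l Y))"

definition torsion_bar :: "('a::euclidean_space \<Rightarrow> 'a \<Rightarrow> 'a) \<Rightarrow> (nat \<Rightarrow> 'a set) \<Rightarrow> nat \<Rightarrow> 'a \<Rightarrow> 'a \<Rightarrow> 'a" where
  "torsion_bar br gr l X Y = nabla_bar br gr l X Y - nabla_bar br gr l Y X - br X Y"

definition curv_bar :: "('a::euclidean_space \<Rightarrow> 'a \<Rightarrow> 'a) \<Rightarrow> (nat \<Rightarrow> 'a set) \<Rightarrow> nat \<Rightarrow> 'a \<Rightarrow> 'a \<Rightarrow> 'a \<Rightarrow> 'a" where
  "curv_bar br gr l X Y Z = nabla_bar br gr l X (nabla_bar br gr l Y Z)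
      - nabla_bar br gr l Y (nabla_bar br gr l X Z) - nabla_bar br gr l (br X Y) Z"

definition solov_K :: "('a::euclidean_space \<Rightarrow> 'a \<Rightarrow> 'a) \<Rightarrow> (nat \<Rightarrow> 'a set) \<Rightarrow> nat \<Rightarrow> 'a \<Rightarrow> 'a \<Rightarrow> 'a \<Rightarrow> 'a \<Rightarrow> real" where
  "solov_K br gr l X Y Z W = curv_bar br gr l X Y Z \<bullet> W
      - (torsion_bar br gr l X Y \<bullet> torsion_bar br gr l Z W) / 2"

definition solov_sectional :: "('a::euclidean_space \<Rightarrow> 'a \<Rightarrow> 'a) \<Rightarrow> (nat \<Rightarrow> 'a set) \<Rightarrow> nat \<Rightarrow> 'a \<Rightarrow> 'a \<Rightarrow> real" where
  "solov_sectional br gr l u v = solov_K br gr l u v v u /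
      ((norm u)^2 * (norm v)^2 - (u \<bullet> v)^2)"

definition orthonormal_basis_of :: "'a::real_inner set \<Rightarrow> nat \<Rightarrow> (nat \<Rightarrow> 'a) \<Rightarrow> bool" where
  "orthonormal_basis_of S n e \<longleftrightarrow>
     (\<forall>i<n. e i \<in> S) \<and> (\<forall>i<n. \<forall>j<n. e i \<bullet> e j = (if i = j then 1 else 0)) \<and>
     span (e ` {..<n}) = S"

definition solov_ricci :: "('a::euclidean_space \<Rightarrow> 'a \<Rightarrow> 'a) \<Rightarrow> (nat \<Rightarrow> 'a set) \<Rightarrow> nat \<Rightarrow> nat \<Rightarrow> (nat \<Rightarrow> 'a) \<Rightarrow> 'a \<Rightarrow> 'a \<Rightarrow> real" where
  "solov_ricci br gr l n e X Y = (\<Sum>i<n. solov_K br gr l (e i) X Y (e i))"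

definition solov_scalar :: "('a::euclidean_space \<Rightarrow> 'a \<Rightarrow> 'a) \<Rightarrow> (nat \<Rightarrow> 'a set) \<Rightarrow> nat \<Rightarrow> nat \<Rightarrow> (nat \<Rightarrow> 'a) \<Rightarrow> real" where
  "solov_scalar br gr l n e = (\<Sum>j<n. solov_ricci br gr l n e (e j) (e j))"

end

theory Submission
  imports Defs
begin

text \<open>On left-invariant horizontal fields X, Y the Koszul formula only involves brackets of
  horizontal vectors, which lie in the rigging and hence are orthogonal to D; so the
  horizontal connection vanishes and the torsion is T(X,Y) = -[X,Y]. The only surviving
  term of the curvature is -H \<nabla>_{[X,Y]} Z, whose D-component pairs with W to
  ([X,Y],[Z,W])/2, and this is exactly cancelled by the torsion term of K.\<close>

lemma lie_algebra_imp_bilinear: "lie_algebra br \<Longrightarrow> bilinear br"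
  unfolding lie_algebra_def bilinear_def by blast

lemma inner_sum_Basis_scaleR:
  fixes f :: "'a::euclidean_space \<Rightarrow> real"
  assumes "linear f"
  shows "(\<Sum>b\<in>Basis. f b *\<^sub>R b) \<bullet> w = f w"
  using Linear_Algebra.linear_componentwise[OF assms, of w 1]
  by (simp add: inner_sum_left inner_commute[of w] mult.commute)

lemma lc_nabla_inner:
  assumes "bilinear br"
  shows "lc_nabla br X Y \<bullet> W = (br X Y \<bullet> W - br Y W \<bullet> X + br W X \<bullet> Y) / 2"
proof -
  have "linear (\<lambda>b. (br X Y \<bullet> b - br Y b \<bullet> X + br b X \<bullet> Y) / 2)"
    using assms
    by (intro linearI) (simp_all add: bilinear_radd bilinear_ladd bilinear_rmul bilinear_lmul
        inner_add_left inner_add_right field_simps)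
  then show ?thesis
    unfolding lc_nabla_def by (rule inner_sum_Basis_scaleR)
qed

lemma lc_nabla_zero_right: "bilinear br \<Longrightarrow> lc_nabla br X 0 = 0"
  unfolding lc_nabla_def by (simp add: bilinear_lzero bilinear_rzero)

lemma riem_curv_commutative: "commutative_alg br \<Longrightarrow> riem_curv br X Y Z = 0"
  unfolding commutative_alg_def riem_curv_def lc_nabla_def by simp

lemma the_complement_component:
  assumes "subspace U" "subspace W" "U \<inter> W \<subseteq> {0}" "u \<in> U" "x - u \<in> W"
  shows "(THE u. u \<in> U \<and> x - u \<in> W) = u"
proof (rule the_equality)
  fix u' assume u': "u' \<in> U \<and> x - u' \<in> W"
  have "u' - u \<in> U"
    using assms(1,4) u' by (simp add: subspace_diff)
  moreover have "u' - u \<in> W"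
    using subspace_diff[OF assms(2) assms(5), of "x - u'"] u' by simp
  ultimately have "u' - u = 0"
    using assms(3) by auto
  then show "u' = u" by simp
qed (use assms in simp)

lemma subspace_rigging: "subspace (rigging gr l)"
  unfolding rigging_def by simp

lemma layer_subset_rigging: "k \<in> {2..l} \<Longrightarrow> gr k \<subseteq> rigging gr l"
  unfolding rigging_def by (intro subsetI span_base) auto

locale carnot =
  fixes br :: "'a::real_vector \<Rightarrow> 'a \<Rightarrow> 'a" and gr :: "nat \<Rightarrow> 'a set" and l :: nat
  assumes is_carnot: "carnot_algebra br gr l"
begin

lemma bilinear_bracket: "bilinear br"
  using is_carnot lie_algebra_imp_bilinear unfolding carnot_algebra_def by blast

lemma step_pos: "1 \<le> l"
  using is_carnot unfolding carnot_algebra_def by blast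

lemma subspace_layer: "k \<in> {1..l} \<Longrightarrow> subspace (gr k)"
  using is_carnot unfolding carnot_algebra_def direct_sum_decomp_def by blast

lemma layers_decomposition: "\<exists>c. (\<forall>k\<in>{1..l}. c k \<in> gr k) \<and> x = (\<Sum>k=1..l. c k)"
  using is_carnot unfolding carnot_algebra_def direct_sum_decomp_def by blast

lemma bracket_graded:
  "i \<in> {1..l} \<Longrightarrow> j \<in> {1..l} \<Longrightarrow> x \<in> gr i \<Longrightarrow> y \<in> gr j \<Longrightarrow>
    br x y \<in> (if i + j \<le> l then gr (i + j) else {0})"
  using is_carnot unfolding carnot_algebra_def by blast

lemma bracket_homogeneous:
  assumes "i \<in> {1..l}" "j \<in> {1..l}" "x \<in> gr i" "y \<in> gr j"
  obtains k where "k \<in> {1..l}" "br x y \<in> gr k"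
proof (cases "i + j \<le> l")
  case True
  then show ?thesis
    using that[of "i + j"] bracket_graded[OF assms] assms(1) by auto
next
  case False
  then have "br x y = 0"
    using bracket_graded[OF assms] by simp
  then show ?thesis
    using that[of 1] step_pos subspace_layer[of 1] by (simp add: subspace_0)
qed

lemma bracket_in_rigging:
  assumes "i \<in> {1..l}" "j \<in> {1..l}" "x \<in> gr i" "y \<in> gr j"
  shows "br x y \<in> rigging gr l"
proof (cases "i + j \<le> l")
  case True
  then show ?thesis
    using bracket_graded[OF assms] assms(1,2) layer_subset_rigging[of "i + j" l gr] by auto
next
  case False
  then show ?thesis
    using bracket_graded[OF assms] by (simp add: subspace_0[OF subspace_rigging])
qed

lemma horizontal_rigging_decomposition: "\<exists>h\<in>gr 1. x - h \<in> rigging gr l"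
proof -
  obtain c where c: "\<forall>k\<in>{1..l}. c k \<in> gr k" and x: "x = (\<Sum>k=1..l. c k)"
    using layers_decomposition by blast
  have "x - c 1 = (\<Sum>k=2..l. c k)"
    using x step_pos by (simp add: sum.atLeast_Suc_atMost numeral_2_eq_2)
  also have "\<dots> \<in> rigging gr l"
  proof (rule subspace_sum[OF subspace_rigging])
    show "c k \<in> rigging gr l" if "k \<in> {2..l}" for k
    proof -
      have "c k \<in> gr k"
        using c that by auto
      then show ?thesis
        using layer_subset_rigging[OF that] by blast
    qed
  qed
  finally show ?thesis
    using c step_pos by auto
qed

lemma step_ge_2_if_noncommutative:
  assumes "\<not> commutative_alg br"
  shows "2 \<le> l"
proof (rule ccontr)
  assume "\<not> 2 \<le> l"
  then have l: "l = 1"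
    using step_pos by simp
  have horizontal: "x \<in> gr 1" for x
    using layers_decomposition[of x] l by auto
  have "br x y = 0" for x y
    using bracket_graded[of 1 1 x y] horizontal l by simp
  then show False
    using assms unfolding commutative_alg_def by blast
qed

end

locale carnot_orthogonal_rigging = carnot br gr l
  for br :: "'a::euclidean_space \<Rightarrow> 'a \<Rightarrow> 'a" and gr l +
  assumes orthogonal: "\<forall>x\<in>gr 1. \<forall>y\<in>rigging gr l. x \<bullet> y = 0"
begin

lemma subspace_horizontal: "subspace (gr 1)"
  using subspace_layer step_pos by simp

lemma zero_horizontal: "0 \<in> gr 1"
  using subspace_0[OF subspace_horizontal] .

lemma horizontal_inter_rigging: "gr 1 \<inter> rigging gr l \<subseteq> {0}"
proof
  fix x assume "x \<in> gr 1 \<inter> rigging gr l"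
  then have "x \<bullet> x = 0"
    using orthogonal by blast
  then show "x \<in> {0}" by simp
qed

lemma rigging_orthogonal_horizontal: "v \<in> rigging gr l \<Longrightarrow> w \<in> gr 1 \<Longrightarrow> v \<bullet> w = 0"
  using orthogonal by (metis inner_commute)

lemma hproj_eq: "h \<in> gr 1 \<Longrightarrow> x - h \<in> rigging gr l \<Longrightarrow> hproj gr l x = h"
  unfolding hproj_def
  using the_complement_component subspace_horizontal subspace_rigging horizontal_inter_rigging
  by blast

lemma vproj_eq: "v \<in> rigging gr l \<Longrightarrow> x - v \<in> gr 1 \<Longrightarrow> vproj gr l x = v"
  unfolding vproj_def
  using the_complement_component subspace_horizontal subspace_rigging horizontal_inter_rigging
  by blast

lemma hproj_horizontal: "x \<in> gr 1 \<Longrightarrow> hproj gr l x = x"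
  using hproj_eq[of x x] by (simp add: subspace_0[OF subspace_rigging])

lemma vproj_horizontal: "x \<in> gr 1 \<Longrightarrow> vproj gr l x = 0"
  using vproj_eq[of 0 x] by (simp add: subspace_0[OF subspace_rigging])

lemma hproj_mem: "hproj gr l x \<in> gr 1"
  and hproj_inner_horizontal: "w \<in> gr 1 \<Longrightarrow> hproj gr l x \<bullet> w = x \<bullet> w"
proof -
  obtain h where h: "h \<in> gr 1" "x - h \<in> rigging gr l"
    using horizontal_rigging_decomposition by blast
  then show "hproj gr l x \<in> gr 1"
    using hproj_eq by simp
  show "hproj gr l x \<bullet> w = x \<bullet> w" if "w \<in> gr 1"
    using hproj_eq[OF h] rigging_orthogonal_horizontal[OF h(2) that]
    by (simp add: inner_diff_left)
qed

lemma hproj_eq_0_if_orthogonal: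
  assumes "\<forall>w\<in>gr 1. x \<bullet> w = 0"
  shows "hproj gr l x = 0"
proof -
  have "hproj gr l x \<bullet> hproj gr l x = x \<bullet> hproj gr l x"
    using hproj_inner_horizontal[OF hproj_mem] .
  also have "\<dots> = 0"
    using assms hproj_mem by blast
  finally show ?thesis by simp
qed

lemma nabla_bar_horizontal: "Y \<in> gr 1 \<Longrightarrow> nabla_bar br gr l X Y = hproj gr l (lc_nabla br X Y)"
  unfolding nabla_bar_def
  by (simp add: hproj_horizontal vproj_horizontal[OF zero_horizontal] vproj_horizontal
      lc_nabla_zero_right[OF bilinear_bracket])

lemma bracket_horizontal_in_rigging: "X \<in> gr 1 \<Longrightarrow> Y \<in> gr 1 \<Longrightarrow> br X Y \<in> rigging gr l"
  using bracket_in_rigging[of 1 1 X Y] step_pos by simp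

lemma nabla_bar_horizontal_eq_0:
  assumes "X \<in> gr 1" "Y \<in> gr 1"
  shows "nabla_bar br gr l X Y = 0"
proof -
  have "lc_nabla br X Y \<bullet> w = 0" if "w \<in> gr 1" for w
    using assms that bracket_horizontal_in_rigging rigging_orthogonal_horizontal
    by (simp add: lc_nabla_inner[OF bilinear_bracket])
  then show ?thesis
    using assms(2) by (simp add: nabla_bar_horizontal hproj_eq_0_if_orthogonal)
qed

lemma torsion_bar_horizontal: "X \<in> gr 1 \<Longrightarrow> Y \<in> gr 1 \<Longrightarrow> torsion_bar br gr l X Y = - br X Y"
  unfolding torsion_bar_def by (simp add: nabla_bar_horizontal_eq_0)

lemma bracket3_in_rigging:
  assumes "X \<in> gr 1" "Y \<in> gr 1" "Z \<in> gr 1"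
  shows "br (br X Y) Z \<in> rigging gr l" "br Z (br X Y) \<in> rigging gr l"
proof -
  obtain k where "k \<in> {1..l}" "br X Y \<in> gr k"
    using bracket_homogeneous[of 1 1 X Y] assms(1,2) step_pos by auto
  then show "br (br X Y) Z \<in> rigging gr l" "br Z (br X Y) \<in> rigging gr l"
    using bracket_in_rigging[of k 1 "br X Y" Z] bracket_in_rigging[of 1 k Z "br X Y"]
      assms(3) step_pos by auto
qed

lemma curv_bar_horizontal_inner:
  assumes "X \<in> gr 1" "Y \<in> gr 1" "Z \<in> gr 1" "W \<in> gr 1"
  shows "curv_bar br gr l X Y Z \<bullet> W = (br X Y \<bullet> br Z W) / 2"
proof -
  have "curv_bar br gr l X Y Z = - hproj gr l (lc_nabla br (br X Y) Z)"
    using assms zero_horizontal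
    unfolding curv_bar_def by (simp add: nabla_bar_horizontal_eq_0 nabla_bar_horizontal)
  then have "curv_bar br gr l X Y Z \<bullet> W = - (lc_nabla br (br X Y) Z \<bullet> W)"
    using assms(4) by (simp add: hproj_inner_horizontal)
  also have "\<dots> = (br Z W \<bullet> br X Y) / 2"
    using assms bracket3_in_rigging[of X Y Z] bracket3_in_rigging[of X Y W]
      rigging_orthogonal_horizontal
    by (simp add: lc_nabla_inner[OF bilinear_bracket])
  finally show ?thesis
    by (simp add: inner_commute)
qed

lemma solov_K_horizontal_eq_0:
  "X \<in> gr 1 \<Longrightarrow> Y \<in> gr 1 \<Longrightarrow> Z \<in> gr 1 \<Longrightarrow> W \<in> gr 1 \<Longrightarrow> solov_K br gr l X Y Z W = 0"
  unfolding solov_K_def by (simp add: curv_bar_horizontal_inner torsion_bar_horizontal)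

end

theorem corollary2:
  fixes br :: "'a::euclidean_space \<Rightarrow> 'a \<Rightarrow> 'a" and gr :: "nat \<Rightarrow> 'a set" and l :: nat
  assumes "carnot_algebra br gr l"
  shows "(commutative_alg br \<longrightarrow> (\<forall>X Y Z. riem_curv br X Y Z = 0))
       \<and> (\<not> commutative_alg br \<and> (\<forall>x\<in>gr 1. \<forall>y\<in>rigging gr l. x \<bullet> y = 0) \<longrightarrow>
            l \<ge> 2 \<and>
            (\<forall>u\<in>gr 1. \<forall>v\<in>gr 1. \<not> dependent {u, v} \<and> u \<noteq> v \<longrightarrow> solov_sectional br gr l u v = 0) \<and>
            (\<forall>n e. orthonormal_basis_of (gr 1) n e \<longrightarrow>
               (\<forall>X\<in>gr 1. \<forall>Y\<in>gr 1. solov_ricci br gr l n e X Y = 0) \<and>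
               solov_scalar br gr l n e = 0))"
proof (intro conjI impI)
  show "\<forall>X Y Z. riem_curv br X Y Z = 0" if "commutative_alg br"
    using that by (simp add: riem_curv_commutative)
next
  assume noncommutative_orthogonal:
    "\<not> commutative_alg br \<and> (\<forall>x\<in>gr 1. \<forall>y\<in>rigging gr l. x \<bullet> y = 0)"
  then interpret carnot_orthogonal_rigging br gr l
    using assms by unfold_locales auto
  show "l \<ge> 2"
    using noncommutative_orthogonal step_ge_2_if_noncommutative by blast
  show "\<forall>u\<in>gr 1. \<forall>v\<in>gr 1. \<not> dependent {u, v} \<and> u \<noteq> v \<longrightarrow> solov_sectional br gr l u v = 0"
    by (simp add: solov_sectional_def solov_K_horizontal_eq_0)
  show "\<forall>n e. orthonormal_basis_of (gr 1) n e \<longrightarrow>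
          (\<forall>X\<in>gr 1. \<forall>Y\<in>gr 1. solov_ricci br gr l n e X Y = 0) \<and> solov_scalar br gr l n e = 0"
    by (simp add: orthonormal_basis_of_def solov_ricci_def solov_scalar_def solov_K_horizontal_eq_0)
qed

end
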